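(* Let $\{\Delta_1,\dots,\Delta_s\}$ be a nef-partition in $M_\mathbb{R}$ with $\operatorname{Conv}(\cup_i\Delta_i)$ reflexive, let $K\subset\overline M_\mathbb{R}$ be its associated cone and $\deg^\vee=(1,\dots,1;0)$. Let $\{\tilde\Delta_1,\dots,\tilde\Delta_s\}$ be another nef-partition of $\operatorname{Conv}(\cup_i\Delta_i)$. Then there exist nonzero $\tilde e_1,\dots,\tilde e_s\in K^\vee\cap\overline N$ with $\sum_i\tilde e_i=\deg^\vee$ such that $\tilde\Delta_i=p(\tilde S_i)$ for all $i$ (i.e. $\{\tilde\Delta_i\}$ is obtained from the reflexive Gorenstein cone), if and only if, after renumbering the $\tilde\Delta_i$, the divisors $\tilde{\mathcal L}_i$ and $\mathcal L_i$ on $X(\Sigma)$ are linearly equivalent for every $i$.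
   Context: $M\cong\mathbb{Z}^d$, $N$ its dual. A nef-partition (of length $s$) of $\operatorname{Conv}(\cup_i\Delta_i)$ is a collection of lattice polytopes $\Delta_1,\dots,\Delta_s\subset M_\mathbb{R}$, each containing $0$, whose Minkowski sum is a reflexive polytope (a lattice polytope with $0$ in its interior whose dual $\{y:\langle x,y\rangle\ge-1\ \forall x\}$ is a lattice polytope). $\overline M=\mathbb{Z}^s\oplus M$, $\overline N=\mathbb{Z}^s\oplus N$ with the natural pairing; $p:\overline M\to M$ the projection. $K=\{(a_1,\dots,a_s;x):a_i\ge0,\ x\in\sum a_i\Delta_i\}$, $K^\vee$ its dual cone in $\overline N_\mathbb{R}$. For such $\tilde e_i$, $\tilde S_i=\{x\in K:\langle x,\tilde e_i\rangle=1,\ \langle x,\tilde e_j\rangle=0\ (j\ne i)\}$. $\Sigma=\{0\}\cup\{\mathbb{R}_{\ge0}\theta:\theta\text{ a face of }\operatorname{Conv}(\cup_i\Delta_i)\}$, a fan in $M_\mathbb{R}$ defining the toric variety $X(\Sigma)$; for a vertex $\rho$ of $\operatorname{Conv}(\cup\Delta_i)$, $D_\rho$ is the torus-invariant divisor of the ray $\mathbb{R}_{\ge0}\rho$. $\mathcal L_i=\sum_{\rho\in\operatorname{Ver}(\Delta_i)\setminus\{0\}}D_\rho$ and $\tilde{\mathcal L}_i=\sum_{\rho\in\operatorname{Ver}(\tilde\Delta_i)\setminus\{0\}}D_\rho$, where $\operatorname{Ver}$ denotes the vertex set. *)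

theory Defs
  imports "HOL-Analysis.Analysis"
begin

text \<open>M_R = real^'d (M = integer points), the index set of a nef-partition is the
finite type 's.  Overline M_R = (real^'s) \<times> (real^'d), with the product inner product
as the natural pairing.\<close>

definition lattice_pt :: "real^'d \<Rightarrow> bool" where
  "lattice_pt x \<longleftrightarrow> (\<forall>i. x $ i \<in> \<int>)"

definition lattice_pt2 :: "(real^'s) \<times> (real^'d) \<Rightarrow> bool" where
  "lattice_pt2 y \<longleftrightarrow> (\<forall>i. fst y $ i \<in> \<int>) \<and> lattice_pt (snd y)"

definition lattice_polytope :: "(real^'d) set \<Rightarrow> bool" where
  "lattice_polytope P \<longleftrightarrow> (\<exists>S. finite S \<and> (\<forall>x\<in>S. lattice_pt x) \<and> P = convex hull S)"

definition polar_dual :: "(real^'d) set \<Rightarrow> (real^'d) set" where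
  "polar_dual P = {y. \<forall>x\<in>P. x \<bullet> y \<ge> -1}"

definition reflexive_polytope :: "(real^'d) set \<Rightarrow> bool" where
  "reflexive_polytope P \<longleftrightarrow> lattice_polytope P \<and> 0 \<in> interior P \<and> lattice_polytope (polar_dual P)"

definition minkowski_sum :: "('s::finite \<Rightarrow> (real^'d) set) \<Rightarrow> (real^'d) set" where
  "minkowski_sum \<Delta> = {y. \<exists>x. (\<forall>i. x i \<in> \<Delta> i) \<and> y = (\<Sum>i\<in>UNIV. x i)}"

definition nef_partition :: "('s::finite \<Rightarrow> (real^'d) set) \<Rightarrow> bool" where
  "nef_partition \<Delta> \<longleftrightarrow> (\<forall>i. lattice_polytope (\<Delta> i) \<and> 0 \<in> \<Delta> i)
      \<and> reflexive_polytope (minkowski_sum \<Delta>)"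

definition hull_union :: "('s::finite \<Rightarrow> (real^'d) set) \<Rightarrow> (real^'d) set" where
  "hull_union \<Delta> = convex hull (\<Union>i. \<Delta> i)"

definition vertices :: "(real^'d) set \<Rightarrow> (real^'d) set" where
  "vertices P = {v. v extreme_point_of P}"

definition nef_cone :: "('s::finite \<Rightarrow> (real^'d) set) \<Rightarrow> ((real^'s) \<times> (real^'d)) set" where
  "nef_cone \<Delta> = {(a, x). (\<forall>i. a $ i \<ge> 0) \<and> x \<in> minkowski_sum (\<lambda>i. (\<lambda>v. a $ i *\<^sub>R v) ` \<Delta> i)}"

definition dual_cone :: "((real^'s) \<times> (real^'d)) set \<Rightarrow> ((real^'s) \<times> (real^'d)) set" where
  "dual_cone K = {y. \<forall>x\<in>K. x \<bullet> y \<ge> 0}"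

definition deg_dual :: "(real^'s) \<times> (real^'d)" where
  "deg_dual = ((\<chi> i. 1), 0)"

definition S_tilde :: "((real^'s) \<times> (real^'d)) set \<Rightarrow> ('s \<Rightarrow> (real^'s) \<times> (real^'d)) \<Rightarrow> 's \<Rightarrow> ((real^'s) \<times> (real^'d)) set" where
  "S_tilde K e i = {x\<in>K. x \<bullet> e i = 1 \<and> (\<forall>j. j \<noteq> i \<longrightarrow> x \<bullet> e j = 0)}"

text \<open>Torus-invariant divisors on X(Sigma) are represented by their coefficient
functions on the vertices rho of P = Conv(U Delta_i) (rays of Sigma; the vertices
of a reflexive polytope are primitive lattice points, the ray generators).
L(Delta_i) = sum over rho in Ver(Delta_i) - {0} of D_rho.\<close>
definition nef_divisor :: "(real^'d) set \<Rightarrow> (real^'d) set \<Rightarrow> real^'d \<Rightarrow> int" where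
  "nef_divisor P \<Delta>i = (\<lambda>\<rho>. if \<rho> \<in> vertices P \<and> \<rho> \<in> vertices \<Delta>i - {0} then 1 else 0)"

text \<open>Linear equivalence of torus-invariant divisors: the difference is the principal
divisor div(chi^n) = sum_rho <rho,n> D_rho of a character n in N.\<close>
definition lin_equiv :: "(real^'d) set \<Rightarrow> (real^'d \<Rightarrow> int) \<Rightarrow> (real^'d \<Rightarrow> int) \<Rightarrow> bool" where
  "lin_equiv P D D' \<longleftrightarrow> (\<exists>n. lattice_pt n \<and> (\<forall>\<rho>\<in>vertices P. real_of_int (D \<rho> - D' \<rho>) = \<rho> \<bullet> n))"

end

theory Submission
  imports Defs
begin

(* Every vertex of P = Conv(U Delta_i) lies in exactly one part Delta_k, and every nonzero
   extreme point of a part is a vertex of P: both follow by testing against a lattice point s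
   of the polar dual of the reflexive Minkowski sum with s . rho <= -1.
   Given a splitting e_i = (a_i, n_i) of deg^vee, its pairings with the generators
   (axis k 1, rho) of K are nonnegative integers summing to 1 over i. Hence the a_i are the
   unit vectors of a renumbering sigma, and on the vertices rho . n_i is the difference of the
   coefficients of the two divisors, which is linear equivalence.
   Conversely, characters n_i with these vertex values give e_i = (axis i 1, n_i): the vertex
   values bound n_i from below on every Delta_k, which puts e_i in the dual cone, and
   p(S_i) = tilde Delta_i is checked on vertices, since every point of a part is a convex
   combination of 0 and vertices of P. *)

section \<open>Convexity and lattice polytopes\<close>

lemma lattice_pt_inner_Ints: "lattice_pt x \<Longrightarrow> lattice_pt y \<Longrightarrow> x \<bullet> y \<in> \<int>"
  unfolding lattice_pt_def inner_vec_def by (auto intro!: Ints_sum Ints_mult)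

lemma Ints_le_minus_one_if_negative: "(r::real) \<in> \<int> \<Longrightarrow> r < 0 \<Longrightarrow> r \<le> -1"
  by (elim Ints_cases) simp

lemma Ints_nonneg_sum_eq_1_imp_indicator:
  fixes f :: "'s::finite \<Rightarrow> real"
  assumes "\<And>i. f i \<in> \<int>" "\<And>i. f i \<ge> 0" "(\<Sum>i\<in>UNIV. f i) = 1"
  obtains i where "\<And>j. f j = of_bool (j = i)"
proof -
  obtain i where "f i \<noteq> 0" using assms(3) by (metis sum.neutral zero_neq_one)
  moreover obtain n where "f i = of_int n" using assms(1) Ints_cases by blast
  ultimately have "f i \<ge> 1" using assms(2)[of i] by simp
  moreover have "(\<Sum>j\<in>UNIV. f j) = f i + (\<Sum>j\<in>UNIV - {i}. f j)"
    by (simp add: sum.remove)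
  moreover have "(\<Sum>j\<in>UNIV - {i}. f j) \<ge> 0" using assms(2) by (simp add: sum_nonneg)
  ultimately have "f i = 1" "(\<Sum>j\<in>UNIV - {i}. f j) = 0" using assms(3) by linarith+
  with assms(2) have "f j = of_bool (j = i)" for j
    by (cases "j = i") (simp_all add: sum_nonneg_eq_0_iff)
  then show ?thesis by (rule that)
qed

lemma extreme_point_of_subset:
  "v extreme_point_of P \<Longrightarrow> v \<in> A \<Longrightarrow> A \<subseteq> P \<Longrightarrow> v extreme_point_of A"
  unfolding extreme_point_of_def by blast

lemma convex_scaleR_add_eq:
  fixes C :: "'a::real_vector set"
  assumes "convex C" "0 \<in> C" "0 \<le> \<alpha>" "0 \<le> \<beta>" "y \<in> C" "y' \<in> C"
  obtains z where "z \<in> C" "\<alpha> *\<^sub>R y + \<beta> *\<^sub>R y' = (\<alpha> + \<beta>) *\<^sub>R z"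
proof (cases "\<alpha> + \<beta> = 0")
  case True
  then have "\<alpha> = 0" "\<beta> = 0" using assms(3,4) by auto
  then show ?thesis using assms(2) that[of 0] by simp
next
  case False
  then have pos: "\<alpha> + \<beta> > 0" using assms by auto
  define z where "z = (\<alpha> / (\<alpha> + \<beta>)) *\<^sub>R y + (\<beta> / (\<alpha> + \<beta>)) *\<^sub>R y'"
  have "\<alpha> / (\<alpha> + \<beta>) + \<beta> / (\<alpha> + \<beta>) = 1" using pos by (simp add: add_divide_distrib[symmetric])
  then have "z \<in> C" unfolding z_def using assms by (intro convexD) auto
  moreover have "\<alpha> *\<^sub>R y + \<beta> *\<^sub>R y' = (\<alpha> + \<beta>) *\<^sub>R z"
    using pos by (simp add: z_def scaleR_add_right)
  ultimately show ?thesis by (rule that)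
qed

lemma face_of_Int_supporting_hyperplanes_ge:
  fixes C :: "'a::real_inner set"
  assumes "convex C" and valid: "\<And>y i. y \<in> C \<Longrightarrow> i \<in> I \<Longrightarrow> b i \<le> y \<bullet> w i"
  shows "{y\<in>C. \<forall>i\<in>I. y \<bullet> w i = b i} face_of C"
proof (cases "I = {}")
  case True
  then show ?thesis using assms(1) by (simp add: face_of_refl)
next
  case False
  have "{y\<in>C. \<forall>i\<in>I. y \<bullet> w i = b i} = \<Inter>((\<lambda>i. C \<inter> {y. w i \<bullet> y = b i}) ` I)"
    using False by (auto simp: inner_commute)
  also have "\<dots> face_of C"
  proof (rule face_of_Inter)
    fix T assume "T \<in> (\<lambda>i. C \<inter> {y. w i \<bullet> y = b i}) ` I"
    then obtain i where "i \<in> I" "T = C \<inter> {y. w i \<bullet> y = b i}" by blast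
    moreover have "\<And>y. y \<in> C \<Longrightarrow> b i \<le> w i \<bullet> y"
      using valid \<open>i \<in> I\<close> by (simp add: inner_commute)
    ultimately show "T face_of C"
      using face_of_Int_supporting_hyperplane_ge[OF assms(1)] by blast
  qed (use False in simp)
  finally show ?thesis .
qed

lemma supporting_face_of_convex_hull_subset:
  fixes S :: "'a::euclidean_space set"
  assumes "compact S" "convex C"
    and bound: "\<And>x. x \<in> S \<Longrightarrow> b \<le> a \<bullet> x" and on_C: "\<And>x. x \<in> S \<Longrightarrow> a \<bullet> x = b \<Longrightarrow> x \<in> C"
  shows "convex hull S \<inter> {x. a \<bullet> x = b} face_of convex hull S"
    and "convex hull S \<inter> {x. a \<bullet> x = b} \<subseteq> C"
proof -
  let ?F = "convex hull S \<inter> {x. a \<bullet> x = b}"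
  have "convex hull S \<subseteq> {x. b \<le> a \<bullet> x}"
    using bound by (intro hull_minimal convex_halfspace_ge) auto
  then show face: "?F face_of convex hull S"
    by (intro face_of_Int_supporting_hyperplane_ge) auto
  obtain T where T: "T \<subseteq> S" "?F = convex hull T"
    using assms(1) face by (rule face_of_convex_hull_subset)
  have "T \<subseteq> ?F" unfolding T(2) by (rule hull_subset)
  then have "T \<subseteq> C" using T(1) on_C by auto
  then show "?F \<subseteq> C" unfolding T(2) using assms(2) by (rule hull_minimal)
qed

lemma nonneg_on_zero_interior_imp_eq_0:
  fixes w :: "'a::euclidean_space"
  assumes "0 \<in> interior P" "\<And>x. x \<in> P \<Longrightarrow> 0 \<le> x \<bullet> w"
  shows "w = 0"
proof (rule ccontr)
  assume "w \<noteq> 0"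
  then have nw: "norm w > 0" by simp
  obtain e where e: "e > 0" "ball 0 e \<subseteq> P" using assms(1) mem_interior by blast
  define x where "x = - (e / (2 * norm w)) *\<^sub>R w"
  have "norm x < e" using nw e by (simp add: x_def)
  then have "0 \<le> x \<bullet> w" using e assms(2) by auto
  moreover have "x \<bullet> w = - (e / 2) * norm w"
    using nw by (simp add: x_def dot_square_norm power2_eq_square)
  ultimately show False using mult_pos_pos[OF e(1) nw] by linarith
qed

lemma lattice_polytope_compact: "lattice_polytope P \<Longrightarrow> compact P"
  unfolding lattice_polytope_def by (auto intro: finite_imp_compact_convex_hull)

lemma lattice_polytope_convex: "lattice_polytope P \<Longrightarrow> convex P"
  unfolding lattice_polytope_def by auto

lemma lattice_polytope_hull_extreme_points:
  "lattice_polytope P \<Longrightarrow> P = convex hull {x. x extreme_point_of P}"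
  by (simp add: Krein_Milman_Minkowski lattice_polytope_compact lattice_polytope_convex)

lemma lattice_polytope_extreme_point_lattice:
  "lattice_polytope P \<Longrightarrow> v extreme_point_of P \<Longrightarrow> lattice_pt v"
  unfolding lattice_polytope_def using extreme_point_of_convex_hull by blast

lemma nonneg_on_vertices_imp_eq_0:
  assumes "lattice_polytope P" "0 \<in> interior P" "\<And>\<rho>. \<rho> \<in> vertices P \<Longrightarrow> 0 \<le> \<rho> \<bullet> m"
  shows "m = 0"
proof (rule nonneg_on_zero_interior_imp_eq_0[OF assms(2)])
  have hull: "P = convex hull (vertices P)"
    unfolding vertices_def by (rule lattice_polytope_hull_extreme_points[OF assms(1)])
  have "convex hull (vertices P) \<subseteq> {x. 0 \<le> m \<bullet> x}"
    using assms(3) by (intro hull_minimal convex_halfspace_ge) (auto simp: inner_commute)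
  then show "0 \<le> x \<bullet> m" if "x \<in> P" for x
    using that by (subst (asm) hull) (auto simp: inner_commute)
qed

lemma reflexive_polytope_polar_dual_witness:
  assumes M: "reflexive_polytope M" and w: "lattice_pt w" "w \<noteq> 0"
  obtains s where "s \<in> polar_dual M" "w \<bullet> s \<le> -1"
proof -
  obtain S where S: "finite S" "\<forall>x\<in>S. lattice_pt x" "polar_dual M = convex hull S"
    using M unfolding reflexive_polytope_def lattice_polytope_def by blast
  obtain B where B: "B > 0" "\<And>x. x \<in> M \<Longrightarrow> norm x \<le> B"
    using M unfolding reflexive_polytope_def
    by (meson bounded_pos compact_imp_bounded lattice_polytope_compact)
  define y where "y = - (1 / (B * norm w)) *\<^sub>R w"
  have "norm y = 1 / B" using B w by (simp add: y_def)
  have y_polar: "y \<in> polar_dual M"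
    unfolding polar_dual_def
  proof (safe)
    fix x assume "x \<in> M"
    have "\<bar>x \<bullet> y\<bar> \<le> norm x * norm y" by (rule Cauchy_Schwarz_ineq2)
    also have "\<dots> \<le> B * (1 / B)"
      using B \<open>x \<in> M\<close> \<open>norm y = 1 / B\<close> by (simp add: mult_right_mono)
    finally show "x \<bullet> y \<ge> -1" using B by (simp add: abs_le_iff)
  qed
  have "w \<bullet> y < 0" using B w by (simp add: y_def)
  have "\<not> (\<forall>s\<in>S. 0 \<le> w \<bullet> s)"
  proof
    assume "\<forall>s\<in>S. 0 \<le> w \<bullet> s"
    then have "convex hull S \<subseteq> {v. 0 \<le> w \<bullet> v}"
      by (intro hull_minimal convex_halfspace_ge) auto
    then show False using y_polar \<open>w \<bullet> y < 0\<close> S(3) by auto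
  qed
  then obtain s where s: "s \<in> S" "w \<bullet> s < 0" by (auto simp: not_le)
  have "w \<bullet> s \<in> \<int>" using lattice_pt_inner_Ints[OF w(1)] S(2) s(1) by blast
  then have "w \<bullet> s \<le> -1" using s(2) by (rule Ints_le_minus_one_if_negative)
  moreover have "s \<in> polar_dual M" using s(1) S(3) hull_inc by metis
  ultimately show ?thesis using that by blast
qed

section \<open>Vertices of nef-partitions\<close>

lemma minkowski_sumI: "(\<And>i. x i \<in> D i) \<Longrightarrow> (\<Sum>i\<in>UNIV. x i) \<in> minkowski_sum D"
  unfolding minkowski_sum_def by blast

lemma minkowski_sum_single:
  fixes D :: "'s::finite \<Rightarrow> (real^'d) set"
  assumes "\<And>i. 0 \<in> D i" "y \<in> D k"
  shows "y \<in> minkowski_sum D"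
proof -
  have "(\<Sum>i\<in>UNIV. if i = k then y else 0) = y" by simp
  moreover have "(if i = k then y else 0) \<in> D i" for i using assms by auto
  ultimately show ?thesis using minkowski_sumI[of "\<lambda>i. if i = k then y else 0" D] by simp
qed

lemma minkowski_sum_pair:
  fixes D :: "'s::finite \<Rightarrow> (real^'d) set"
  assumes "\<And>i. 0 \<in> D i" "y \<in> D k" "z \<in> D j" "j \<noteq> k"
  shows "y + z \<in> minkowski_sum D"
proof -
  let ?x = "\<lambda>i. (if i = k then y else 0) + (if i = j then z else 0)"
  have "(\<Sum>i\<in>UNIV. ?x i) = y + z"
    by (simp add: sum.distrib)
  moreover have "?x i \<in> D i" for i
    using assms by auto
  ultimately show ?thesis using minkowski_sumI[of ?x D] by simp
qed

lemma nef_partition_zero: "nef_partition D \<Longrightarrow> 0 \<in> D i"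
  unfolding nef_partition_def by blast

lemma nef_partition_lattice_polytope: "nef_partition D \<Longrightarrow> lattice_polytope (D i)"
  unfolding nef_partition_def by blast

lemma nef_partition_polar_dual_witness:
  assumes "nef_partition D" "lattice_pt w" "w \<noteq> 0"
  obtains s where "\<And>x. x \<in> minkowski_sum D \<Longrightarrow> -1 \<le> x \<bullet> s" "w \<bullet> s \<le> -1"
proof -
  have "reflexive_polytope (minkowski_sum D)" using assms(1) by (simp add: nef_partition_def)
  then obtain s where "s \<in> polar_dual (minkowski_sum D)" "w \<bullet> s \<le> -1"
    using reflexive_polytope_polar_dual_witness assms(2,3) by blast
  then show ?thesis using that unfolding polar_dual_def by blast
qed

lemma part_subset_hull_union: "D k \<subseteq> hull_union D"
  unfolding hull_union_def by (meson UN_I UNIV_I hull_subset subset_iff)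

lemma vertex_hull_union_in_part: "\<rho> \<in> vertices (hull_union D) \<Longrightarrow> \<exists>k. \<rho> \<in> D k"
  unfolding vertices_def hull_union_def using extreme_point_of_convex_hull by fastforce

lemma vertex_nonzero: "0 \<in> interior P \<Longrightarrow> \<rho> \<in> vertices P \<Longrightarrow> \<rho> \<noteq> (0::real^'d)"
  unfolding vertices_def using extreme_point_not_in_interior by blast

lemma nef_partition_vertex_lattice:
  assumes "nef_partition D" "\<rho> \<in> vertices (hull_union D)"
  shows "lattice_pt \<rho>"
proof -
  obtain k where "\<rho> \<in> D k" using vertex_hull_union_in_part assms(2) by blast
  then have "\<rho> extreme_point_of D k"
    using extreme_point_of_subset[OF _ _ part_subset_hull_union] assms(2)
    unfolding vertices_def by blast
  then show ?thesis
    by (rule lattice_polytope_extreme_point_lattice[OF nef_partition_lattice_polytope[OF assms(1)]])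
qed

lemma nef_partition_vertex_unique_part:
  fixes D :: "'s::finite \<Rightarrow> (real^'d) set"
  assumes D: "nef_partition D" and "0 \<in> interior (hull_union D)"
    and \<rho>: "\<rho> \<in> vertices (hull_union D)" "\<rho> \<in> D k" "\<rho> \<in> D j"
  shows "j = k"
proof (rule ccontr)
  assume "j \<noteq> k"
  have "\<rho> \<noteq> 0" using vertex_nonzero assms(2) \<rho>(1) by blast
  then obtain s where s: "\<And>x. x \<in> minkowski_sum D \<Longrightarrow> -1 \<le> x \<bullet> s" "\<rho> \<bullet> s \<le> -1"
    using nef_partition_polar_dual_witness[OF D nef_partition_vertex_lattice[OF D \<rho>(1)]] by blast
  have "\<rho> + \<rho> \<in> minkowski_sum D"
    using minkowski_sum_pair[OF nef_partition_zero[OF D] \<rho>(2,3) \<open>j \<noteq> k\<close>] .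
  then show False using s(1) s(2) inner_add_left[of \<rho> \<rho> s] by fastforce
qed

text \<open>The separating functional s with w \<bullet> s = -1 is \<ge> -1 on the part containing w and
  \<ge> 0 on all other parts, so the face of the hull on which it equals -1 lies in that part.\<close>
lemma nef_partition_extreme_point_vertex:
  fixes D :: "'s::finite \<Rightarrow> (real^'d) set"
  assumes D: "nef_partition D" and w: "w extreme_point_of D k" "w \<noteq> 0"
  shows "w \<in> vertices (hull_union D)"
proof -
  have zero: "\<And>i. 0 \<in> D i" using nef_partition_zero[OF D] .
  have wD: "w \<in> D k" using w(1) extreme_point_of_def by blast
  have "lattice_pt w"
    using lattice_polytope_extreme_point_lattice nef_partition_lattice_polytope[OF D] w(1) by blast
  then obtain s where s: "\<And>x. x \<in> minkowski_sum D \<Longrightarrow> -1 \<le> x \<bullet> s" "w \<bullet> s \<le> -1"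
    using nef_partition_polar_dual_witness[OF D _ w(2)] by blast
  have ws: "w \<bullet> s = -1" using s(2) s(1)[OF minkowski_sum_single[of D, OF zero wD]] by simp
  have bound: "-1 \<le> s \<bullet> x" and on_part: "s \<bullet> x = -1 \<Longrightarrow> x \<in> D k" if x: "x \<in> (\<Union>j. D j)" for x
  proof -
    obtain j where "x \<in> D j" using x by blast
    show "-1 \<le> s \<bullet> x"
      by (subst inner_commute) (rule s(1)[OF minkowski_sum_single[of D, OF zero \<open>x \<in> D j\<close>]])
    show "x \<in> D k" if "s \<bullet> x = -1"
    proof (rule ccontr)
      assume "x \<notin> D k"
      then have "w + x \<in> minkowski_sum D"
        using minkowski_sum_pair[of D, OF zero wD \<open>x \<in> D j\<close>] \<open>x \<in> D j\<close> by blast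
      then have "-1 \<le> w \<bullet> s + x \<bullet> s" using s(1)[of "w + x"] by (simp add: inner_add_left)
      then show False using ws that inner_commute[of s x] by linarith
    qed
  qed
  let ?F = "hull_union D \<inter> {x. s \<bullet> x = -1}"
  have "compact (\<Union>i. D i)"
    by (intro compact_UN) (auto intro: lattice_polytope_compact nef_partition_lattice_polytope[OF D])
  note face_subset = supporting_face_of_convex_hull_subset[OF this
      lattice_polytope_convex[OF nef_partition_lattice_polytope[OF D]] bound on_part]
  have face: "?F face_of hull_union D" and F_part: "?F \<subseteq> D k"
    using face_subset by (simp_all only: hull_union_def)
  have "w \<in> ?F" using wD part_subset_hull_union ws by (auto simp: inner_commute)
  then have "w extreme_point_of ?F" by (rule extreme_point_of_subset[OF w(1) _ F_part])
  then show ?thesis using extreme_point_of_face[OF face, of w] unfolding vertices_def by simp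
qed

lemma nef_partition_part_subsetI:
  assumes D: "nef_partition D" and G: "convex G" "0 \<in> G"
    and vertices_in: "\<And>\<rho>. \<rho> \<in> vertices (hull_union D) \<Longrightarrow> \<rho> \<in> D k \<Longrightarrow> \<rho> \<in> G"
  shows "D k \<subseteq> G"
proof -
  have "D k = convex hull {x. x extreme_point_of D k}"
    using lattice_polytope_hull_extreme_points nef_partition_lattice_polytope[OF D] .
  also have "\<dots> \<subseteq> G"
  proof (rule hull_minimal, safe)
    fix x assume "x extreme_point_of D k"
    then show "x \<in> G"
      using G(2) vertices_in nef_partition_extreme_point_vertex[OF D]
      by (cases "x = 0") (auto simp: extreme_point_of_def)
  qed (rule G(1))
  finally show ?thesis .
qed

lemma nef_divisor_at_vertex:
  assumes "\<rho> \<in> vertices P" "0 \<in> interior P" "A \<subseteq> P"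
  shows "nef_divisor P A \<rho> = of_bool (\<rho> \<in> A)"
proof -
  have "\<rho> \<in> vertices A \<longleftrightarrow> \<rho> \<in> A"
    using assms(1,3) extreme_point_of_subset unfolding vertices_def extreme_point_of_def by blast
  then show ?thesis using assms(1) vertex_nonzero[OF assms(2)] unfolding nef_divisor_def by auto
qed

section \<open>The cone of a nef-partition\<close>

lemma inner_axis_pair: "(axis j 1, x) \<bullet> e = fst e $ j + x \<bullet> snd e"
  by (simp add: inner_prod_def inner_axis')

lemma nef_coneI:
  assumes "\<And>i. 0 \<le> a $ i" "\<And>k. y k \<in> D k"
  shows "(a, \<Sum>k\<in>UNIV. a $ k *\<^sub>R y k) \<in> nef_cone D"
  unfolding nef_cone_def using assms by (auto intro!: minkowski_sumI)

lemma nef_coneE: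
  assumes "(a, x) \<in> nef_cone D"
  obtains y where "\<And>i. 0 \<le> a $ i" "\<And>k. y k \<in> D k" "x = (\<Sum>k\<in>UNIV. a $ k *\<^sub>R y k)"
proof -
  obtain z where z: "\<forall>i. z i \<in> (\<lambda>v. a $ i *\<^sub>R v) ` D i" "x = (\<Sum>i\<in>UNIV. z i)"
    using assms unfolding nef_cone_def minkowski_sum_def by blast
  then have "\<forall>i. \<exists>y. y \<in> D i \<and> z i = a $ i *\<^sub>R y" by blast
  then obtain y where "\<forall>i. y i \<in> D i \<and> z i = a $ i *\<^sub>R y i" by metis
  with z(2) assms show ?thesis using that unfolding nef_cone_def by auto
qed

lemma axis_in_nef_cone:
  assumes "\<And>i. 0 \<in> D i" "x \<in> D j"
  shows "(axis j 1, x) \<in> nef_cone D"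
proof -
  let ?y = "\<lambda>i. if i = j then x else 0"
  have "axis j 1 $ i *\<^sub>R ?y i = ?y i" for i by (simp add: axis_def)
  then have "(\<Sum>i\<in>UNIV. axis j 1 $ i *\<^sub>R ?y i) = x" by simp
  moreover have "(axis j 1, \<Sum>i\<in>UNIV. axis j 1 $ i *\<^sub>R ?y i) \<in> nef_cone D"
    using assms by (intro nef_coneI) (auto simp: axis_def)
  ultimately show ?thesis by simp
qed

lemma convex_nef_cone:
  assumes "\<And>i. convex (D i)" "\<And>i. 0 \<in> D i"
  shows "convex (nef_cone D)"
proof (rule convexI, safe)
  fix a x b x' and u v :: real
  assume ax: "(a, x) \<in> nef_cone D" and bx: "(b, x') \<in> nef_cone D"
    and uv: "0 \<le> u" "0 \<le> v" "u + v = 1"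
  obtain y where a: "\<And>i. 0 \<le> a $ i" "\<And>k. y k \<in> D k" "x = (\<Sum>k\<in>UNIV. a $ k *\<^sub>R y k)"
    using ax by (rule nef_coneE) blast
  obtain y' where b: "\<And>i. 0 \<le> b $ i" "\<And>k. y' k \<in> D k" "x' = (\<Sum>k\<in>UNIV. b $ k *\<^sub>R y' k)"
    using bx by (rule nef_coneE) blast
  let ?c = "u *\<^sub>R a + v *\<^sub>R b"
  have "\<exists>z. z \<in> D k \<and> (u * a $ k) *\<^sub>R y k + (v * b $ k) *\<^sub>R y' k = ?c $ k *\<^sub>R z" for k
  proof -
    have "0 \<le> u * a $ k" "0 \<le> v * b $ k" using uv a(1) b(1) by simp_all
    then obtain z where "z \<in> D k"
      "(u * a $ k) *\<^sub>R y k + (v * b $ k) *\<^sub>R y' k = (u * a $ k + v * b $ k) *\<^sub>R z"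
      by (rule convex_scaleR_add_eq[OF assms(1,2) _ _ a(2)[of k] b(2)[of k]]) blast
    then show ?thesis by auto
  qed
  then obtain z where z: "\<And>k. z k \<in> D k"
    "\<And>k. (u * a $ k) *\<^sub>R y k + (v * b $ k) *\<^sub>R y' k = ?c $ k *\<^sub>R z k"
    by metis
  have "u *\<^sub>R x + v *\<^sub>R x' = (\<Sum>k\<in>UNIV. (u * a $ k) *\<^sub>R y k + (v * b $ k) *\<^sub>R y' k)"
    by (simp add: a(3) b(3) scaleR_sum_right sum.distrib)
  also have "\<dots> = (\<Sum>k\<in>UNIV. ?c $ k *\<^sub>R z k)" by (intro sum.cong refl z(2))
  finally have "u *\<^sub>R x + v *\<^sub>R x' = (\<Sum>k\<in>UNIV. ?c $ k *\<^sub>R z k)" .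
  moreover have "(?c, \<Sum>k\<in>UNIV. ?c $ k *\<^sub>R z k) \<in> nef_cone D"
    using a(1) b(1) uv z(1) by (intro nef_coneI) simp_all
  ultimately show "u *\<^sub>R (a, x) + v *\<^sub>R (b, x') \<in> nef_cone D" by simp
qed

lemma dual_nef_cone_iff:
  assumes "\<And>i. 0 \<in> D i"
  shows "e \<in> dual_cone (nef_cone D) \<longleftrightarrow> (\<forall>k. \<forall>y\<in>D k. 0 \<le> fst e $ k + y \<bullet> snd e)"
proof
  assume "e \<in> dual_cone (nef_cone D)"
  show "\<forall>k. \<forall>y\<in>D k. 0 \<le> fst e $ k + y \<bullet> snd e"
  proof (intro allI ballI)
    fix k y assume "y \<in> D k"
    then have "(axis k 1, y) \<in> nef_cone D" by (rule axis_in_nef_cone[OF assms])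
    then have "0 \<le> (axis k 1, y) \<bullet> e"
      using \<open>e \<in> dual_cone (nef_cone D)\<close> unfolding dual_cone_def by blast
    then show "0 \<le> fst e $ k + y \<bullet> snd e" by (simp add: inner_axis_pair)
  qed
next
  assume nonneg: "\<forall>k. \<forall>y\<in>D k. 0 \<le> fst e $ k + y \<bullet> snd e"
  show "e \<in> dual_cone (nef_cone D)"
    unfolding dual_cone_def
  proof (safe)
    fix a x assume "(a, x) \<in> nef_cone D"
    then obtain y where y: "\<And>i. 0 \<le> a $ i" "\<And>k. y k \<in> D k" "x = (\<Sum>k\<in>UNIV. a $ k *\<^sub>R y k)"
      by (rule nef_coneE) blast
    have "(a, x) \<bullet> e = a \<bullet> fst e + x \<bullet> snd e" by (simp add: inner_prod_def)
    also have "\<dots> = (\<Sum>k\<in>UNIV. a $ k * fst e $ k) + (\<Sum>k\<in>UNIV. a $ k * (y k \<bullet> snd e))"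
      by (simp only: inner_vec_def[of a "fst e"] inner_real_def y(3) inner_sum_left inner_scaleR_left)
    also have "\<dots> = (\<Sum>k\<in>UNIV. a $ k * (fst e $ k + y k \<bullet> snd e))"
      by (simp add: distrib_left sum.distrib)
    also have "\<dots> \<ge> 0" using y(1,2) nonneg by (intro sum_nonneg) simp
    finally show "0 \<le> (a, x) \<bullet> e" .
  qed
qed

locale nef_partitions_common_hull =
  fixes \<Delta> \<Delta>' :: "'s::finite \<Rightarrow> (real^'d) set"
  assumes nef: "nef_partition \<Delta>" and nef': "nef_partition \<Delta>'"
    and reflexive: "reflexive_polytope (hull_union \<Delta>)"
    and common_hull: "hull_union \<Delta>' = hull_union \<Delta>"
begin

lemma zero_in_interior: "0 \<in> interior (hull_union \<Delta>)"
  using reflexive by (simp add: reflexive_polytope_def)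

lemma convex_cone: "convex (nef_cone \<Delta>)"
  using convex_nef_cone lattice_polytope_convex nef_partition_lattice_polytope[OF nef]
    nef_partition_zero[OF nef] by blast

lemma vertex_in_part: "\<rho> \<in> vertices (hull_union \<Delta>) \<Longrightarrow> \<rho> \<in> \<Delta> k \<Longrightarrow> \<rho> \<in> \<Delta> i \<longleftrightarrow> i = k"
  using nef_partition_vertex_unique_part[OF nef zero_in_interior] by blast

lemma vertex_in_part': "\<rho> \<in> vertices (hull_union \<Delta>) \<Longrightarrow> \<rho> \<in> \<Delta>' l \<Longrightarrow> \<rho> \<in> \<Delta>' i \<longleftrightarrow> i = l"
  using nef_partition_vertex_unique_part[OF nef'] zero_in_interior common_hull by metis

lemma sum_of_bool_vertex_in_part:
  assumes "\<rho> \<in> vertices (hull_union \<Delta>)"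
  shows "(\<Sum>i\<in>UNIV. of_bool (\<rho> \<in> \<Delta> i) :: real) = 1"
    and "(\<Sum>i\<in>UNIV. of_bool (\<rho> \<in> \<Delta>' i) :: real) = 1"
proof -
  obtain k l where "\<rho> \<in> \<Delta> k" "\<rho> \<in> \<Delta>' l"
    using vertex_hull_union_in_part assms common_hull by metis
  then show "(\<Sum>i\<in>UNIV. of_bool (\<rho> \<in> \<Delta> i) :: real) = 1"
    and "(\<Sum>i\<in>UNIV. of_bool (\<rho> \<in> \<Delta>' i) :: real) = 1"
    using vertex_in_part vertex_in_part' assms by simp_all
qed

lemma lin_equiv_nef_divisors_iff:
  "lin_equiv (hull_union \<Delta>) (nef_divisor (hull_union \<Delta>) (\<Delta>' j)) (nef_divisor (hull_union \<Delta>) (\<Delta> i))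
    \<longleftrightarrow> (\<exists>n. lattice_pt n \<and>
          (\<forall>\<rho>\<in>vertices (hull_union \<Delta>). \<rho> \<bullet> n = of_bool (\<rho> \<in> \<Delta>' j) - of_bool (\<rho> \<in> \<Delta> i)))"
  unfolding lin_equiv_def
proof (intro ex_cong1 conj_cong refl ball_cong)
  fix n \<rho> assume "\<rho> \<in> vertices (hull_union \<Delta>)"
  then have "nef_divisor (hull_union \<Delta>) (\<Delta>' j) \<rho> = of_bool (\<rho> \<in> \<Delta>' j)"
    "nef_divisor (hull_union \<Delta>) (\<Delta> i) \<rho> = of_bool (\<rho> \<in> \<Delta> i)"
    using nef_divisor_at_vertex[OF _ zero_in_interior] part_subset_hull_union common_hull
    by metis+
  then show "(real_of_int (nef_divisor (hull_union \<Delta>) (\<Delta>' j) \<rho> - nef_divisor (hull_union \<Delta>) (\<Delta> i) \<rho>)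
      = \<rho> \<bullet> n) \<longleftrightarrow> (\<rho> \<bullet> n = of_bool (\<rho> \<in> \<Delta>' j) - of_bool (\<rho> \<in> \<Delta> i))"
    by auto
qed

end

section \<open>Linear equivalences from a splitting of the cone\<close>

locale gorenstein_splitting = nef_partitions_common_hull +
  fixes e :: "'s \<Rightarrow> (real^'s) \<times> (real^'d)"
  assumes nonzero: "e i \<noteq> 0" and dual: "e i \<in> dual_cone (nef_cone \<Delta>)"
    and lattice: "lattice_pt2 (e i)" and sum_eq_deg_dual: "(\<Sum>i\<in>UNIV. e i) = deg_dual"
    and parts'_eq: "\<Delta>' i = snd ` S_tilde (nef_cone \<Delta>) e i"
begin

lemma pairing_nonneg: "y \<in> \<Delta> k \<Longrightarrow> 0 \<le> fst (e i) $ k + y \<bullet> snd (e i)"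
  using dual dual_nef_cone_iff nef_partition_zero[OF nef] by blast

lemma sum_fst: "(\<Sum>i\<in>UNIV. fst (e i) $ k) = 1"
  using arg_cong[OF sum_eq_deg_dual, of "\<lambda>z. fst z $ k"] by (simp add: fst_sum deg_dual_def)

lemma sum_snd: "(\<Sum>i\<in>UNIV. snd (e i)) = 0"
  using arg_cong[OF sum_eq_deg_dual, of snd] by (simp add: snd_sum deg_dual_def)

lemma fst_Ints: "fst (e i) $ k \<in> \<int>"
  using lattice unfolding lattice_pt2_def by blast

lemma snd_lattice: "lattice_pt (snd (e i))"
  using lattice unfolding lattice_pt2_def by blast

lemma fst_eq_indicator: obtains \<tau> where "\<And>i k. fst (e i) $ k = of_bool (i = \<tau> k)"
proof -
  have "\<exists>j. \<forall>i. fst (e i) $ k = of_bool (i = j)" for k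
    using Ints_nonneg_sum_eq_1_imp_indicator[OF fst_Ints _ sum_fst]
      pairing_nonneg[OF nef_partition_zero[OF nef]] by (metis inner_zero_left add_0_right)
  then show ?thesis using that by metis
qed

lemma vertex_pairing:
  assumes \<rho>: "\<rho> \<in> vertices (hull_union \<Delta>)" "\<rho> \<in> \<Delta> k"
  shows "fst (e i) $ k + \<rho> \<bullet> snd (e i) = of_bool (\<rho> \<in> \<Delta>' i)"
proof -
  let ?c = "\<lambda>m. fst (e m) $ k + \<rho> \<bullet> snd (e m)"
  have "?c m \<in> \<int>" for m
    using fst_Ints lattice_pt_inner_Ints[OF nef_partition_vertex_lattice[OF nef \<rho>(1)] snd_lattice]
    by (intro Ints_add)
  moreover have "0 \<le> ?c m" for m using pairing_nonneg[OF \<rho>(2)] .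
  moreover have "(\<Sum>m\<in>UNIV. ?c m) = 1"
    using sum_fst sum_snd by (simp add: sum.distrib inner_sum_right[symmetric])
  ultimately obtain m where m: "\<And>j. ?c j = of_bool (j = m)"
    by (rule Ints_nonneg_sum_eq_1_imp_indicator) blast
  have "(axis k 1, \<rho>) \<in> S_tilde (nef_cone \<Delta>) e m"
    using axis_in_nef_cone[of \<Delta>, OF nef_partition_zero[OF nef] \<rho>(2)] m
    unfolding S_tilde_def by (simp add: inner_axis_pair)
  then have "\<rho> \<in> \<Delta>' m" using parts'_eq by force
  then show ?thesis using m vertex_in_part'[OF \<rho>(1)] by simp
qed

lemma bij_if_fst_eq_indicator:
  assumes \<tau>: "\<And>i k. fst (e i) $ k = of_bool (i = \<tau> k)"
  shows "bij \<tau>"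
proof -
  have "surj \<tau>"
  proof (rule ccontr)
    assume "\<not> surj \<tau>"
    then obtain i where "i \<notin> range \<tau>" by auto
    then have "fst (e i) = 0" using \<tau> by (auto simp: vec_eq_iff)
    then have "snd (e i) \<noteq> 0" using nonzero[of i] by (metis prod.collapse zero_prod_def)
    moreover have "0 \<le> \<rho> \<bullet> snd (e i)" if \<rho>: "\<rho> \<in> vertices (hull_union \<Delta>)" for \<rho>
    proof -
      obtain k where "\<rho> \<in> \<Delta> k" using vertex_hull_union_in_part \<rho> by blast
      from vertex_pairing[OF \<rho> this, of i] show ?thesis using \<open>fst (e i) = 0\<close> by simp
    qed
    ultimately show False
      using nonneg_on_vertices_imp_eq_0 reflexive zero_in_interior
      unfolding reflexive_polytope_def by blast
  qed
  then show ?thesis using finite_UNIV_surj_inj[of \<tau>] by (simp add: bij_def)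
qed

text \<open>The renumbering \<sigma> makes fst (e (\<sigma> i)) the i-th unit vector, and snd (e (\<sigma> i))
  is the character exhibiting the linear equivalence.\<close>
lemma lin_equiv_nef_divisors:
  obtains \<sigma> where "bij \<sigma>" "\<And>i. lin_equiv (hull_union \<Delta>)
    (nef_divisor (hull_union \<Delta>) (\<Delta>' (\<sigma> i))) (nef_divisor (hull_union \<Delta>) (\<Delta> i))"
proof -
  obtain \<tau> where \<tau>: "\<And>i k. fst (e i) $ k = of_bool (i = \<tau> k)" by (rule fst_eq_indicator) blast
  have "bij \<tau>" using \<tau> by (rule bij_if_fst_eq_indicator)
  have "\<rho> \<bullet> snd (e (\<tau> i)) = of_bool (\<rho> \<in> \<Delta>' (\<tau> i)) - of_bool (\<rho> \<in> \<Delta> i)"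
    if \<rho>: "\<rho> \<in> vertices (hull_union \<Delta>)" for \<rho> i
  proof -
    obtain k where k: "\<rho> \<in> \<Delta> k" using vertex_hull_union_in_part \<rho> by blast
    have "fst (e (\<tau> i)) $ k = of_bool (\<rho> \<in> \<Delta> i)"
      using bij_is_inj[OF \<open>bij \<tau>\<close>] by (simp add: \<tau> inj_eq vertex_in_part[OF \<rho> k])
    then show ?thesis using vertex_pairing[OF \<rho> k, of "\<tau> i"] by simp
  qed
  then show ?thesis
    using that[OF \<open>bij \<tau>\<close>] snd_lattice lin_equiv_nef_divisors_iff by blast
qed

end

section \<open>A splitting of the cone from linear equivalences\<close>

locale divisor_differences = nef_partitions_common_hull +
  fixes n :: "'s::finite \<Rightarrow> real^'d"
  assumes lattice: "lattice_pt (n i)"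
    and vertex_inner: "\<rho> \<in> vertices (hull_union \<Delta>) \<Longrightarrow>
      \<rho> \<bullet> n i = of_bool (\<rho> \<in> \<Delta>' i) - of_bool (\<rho> \<in> \<Delta> i)"
begin

definition splitting :: "'s::finite \<Rightarrow> (real^'s) \<times> (real^'d)" where
  "splitting i = (axis i 1, n i)"

lemma vertex_inner_part:
  "\<rho> \<in> vertices (hull_union \<Delta>) \<Longrightarrow> \<rho> \<in> \<Delta> k \<Longrightarrow> \<rho> \<bullet> n i = of_bool (\<rho> \<in> \<Delta>' i) - of_bool (k = i)"
  using vertex_inner vertex_in_part by auto

lemma inner_lower_bound: "y \<in> \<Delta> k \<Longrightarrow> - of_bool (k = i) \<le> y \<bullet> n i"
proof -
  have "\<Delta> k \<subseteq> {y. - of_bool (k = i) \<le> n i \<bullet> y}"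
    using vertex_inner_part
    by (intro nef_partition_part_subsetI[OF nef] convex_halfspace_ge) (auto simp: inner_commute)
  then show "y \<in> \<Delta> k \<Longrightarrow> - of_bool (k = i) \<le> y \<bullet> n i" by (auto simp: inner_commute)
qed

lemma sum_eq_0: "(\<Sum>i\<in>UNIV. n i) = 0"
proof (rule nonneg_on_vertices_imp_eq_0)
  show "lattice_polytope (hull_union \<Delta>)" "0 \<in> interior (hull_union \<Delta>)"
    using reflexive by (simp_all add: reflexive_polytope_def)
  show "0 \<le> \<rho> \<bullet> (\<Sum>i\<in>UNIV. n i)" if "\<rho> \<in> vertices (hull_union \<Delta>)" for \<rho>
    using sum_of_bool_vertex_in_part[OF that]
    by (simp add: inner_sum_right vertex_inner[OF that] sum_subtractf)
qed

lemma splitting_dual_cone: "splitting i \<in> dual_cone (nef_cone \<Delta>)"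
proof (subst dual_nef_cone_iff[OF nef_partition_zero[OF nef]], intro allI ballI)
  fix k y assume "y \<in> \<Delta> k"
  from inner_lower_bound[OF this, of i]
  show "0 \<le> fst (splitting i) $ k + y \<bullet> snd (splitting i)"
    by (cases "k = i") (simp_all add: splitting_def axis_def)
qed

lemma splitting_nonzero: "splitting i \<noteq> 0"
  by (simp add: splitting_def zero_prod_def)

lemma splitting_lattice: "lattice_pt2 (splitting i)"
  using lattice by (simp add: splitting_def lattice_pt2_def axis_def)

lemma sum_splitting: "(\<Sum>i\<in>UNIV. splitting i) = deg_dual"
proof -
  have "(\<Sum>i\<in>UNIV. axis i (1::real)) = (\<chi> i. 1)" by (simp add: vec_eq_iff axis_def)
  then show ?thesis
    using sum_eq_0 by (simp add: splitting_def deg_dual_def prod_eq_iff fst_sum snd_sum)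
qed

lemma mem_S_tilde_splitting_iff:
  "(a, x) \<in> S_tilde (nef_cone \<Delta>) splitting i \<longleftrightarrow>
    (a, x) \<in> nef_cone \<Delta> \<and> (\<forall>j. a $ j + x \<bullet> n j = of_bool (j = i))"
  unfolding S_tilde_def splitting_def by (auto simp: inner_axis)

text \<open>The map x \<mapsto> (lift x, x) is affine and sends every vertex \<rho> \<in> \<Delta> k of \<Delta>' i to the
  generator (axis k 1, \<rho>) of the cone.\<close>
lemma lift_in_nef_cone:
  assumes "x \<in> \<Delta>' i"
  shows "((\<chi> j. of_bool (j = i) - x \<bullet> n j), x) \<in> nef_cone \<Delta>"
proof -
  let ?lift = "\<lambda>x. (\<chi> j. of_bool (j = i) - x \<bullet> n j) :: real^'s"
  have "\<Delta>' i \<subseteq> {x. (?lift x, x) \<in> nef_cone \<Delta>}"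
  proof (rule nef_partition_part_subsetI[OF nef'])
    show "convex {x. (?lift x, x) \<in> nef_cone \<Delta>}"
    proof (rule convexI, simp)
      fix x1 x2 and u v :: real
      assume x: "(?lift x1, x1) \<in> nef_cone \<Delta>" "(?lift x2, x2) \<in> nef_cone \<Delta>"
        and uv: "0 \<le> u" "0 \<le> v" "u + v = 1"
      have "(?lift (u *\<^sub>R x1 + v *\<^sub>R x2), u *\<^sub>R x1 + v *\<^sub>R x2)
          = u *\<^sub>R (?lift x1, x1) + v *\<^sub>R (?lift x2, x2)"
        using uv by (simp add: vec_eq_iff inner_add_left algebra_simps flip: distrib_right)
      then show "(?lift (u *\<^sub>R x1 + v *\<^sub>R x2), u *\<^sub>R x1 + v *\<^sub>R x2) \<in> nef_cone \<Delta>"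
        using convexD[OF convex_cone x uv] by simp
    qed
    have "?lift 0 = axis i 1" by (simp add: vec_eq_iff axis_def)
    then show "0 \<in> {x. (?lift x, x) \<in> nef_cone \<Delta>}"
      using axis_in_nef_cone[of \<Delta>, OF nef_partition_zero[OF nef] nef_partition_zero[OF nef]] by simp
  next
    fix \<rho> assume \<rho>: "\<rho> \<in> vertices (hull_union \<Delta>')" "\<rho> \<in> \<Delta>' i"
    then have \<rho>V: "\<rho> \<in> vertices (hull_union \<Delta>)" using common_hull by simp
    obtain k where k: "\<rho> \<in> \<Delta> k" using vertex_hull_union_in_part \<rho>V by blast
    have "?lift \<rho> = axis k 1"
      using vertex_inner_part[OF \<rho>V k] vertex_in_part'[OF \<rho>V \<rho>(2)]
      by (simp add: vec_eq_iff axis_def)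
    then show "\<rho> \<in> {x. (?lift x, x) \<in> nef_cone \<Delta>}"
      using axis_in_nef_cone[of \<Delta>, OF nef_partition_zero[OF nef] k] by simp
  qed
  then show ?thesis using assms by blast
qed

lemma part'_subset_projection: "\<Delta>' i \<subseteq> snd ` S_tilde (nef_cone \<Delta>) splitting i"
proof
  fix x assume "x \<in> \<Delta>' i"
  then have "((\<chi> j. of_bool (j = i) - x \<bullet> n j), x) \<in> S_tilde (nef_cone \<Delta>) splitting i"
    using lift_in_nef_cone by (simp add: mem_S_tilde_splitting_iff)
  then show "x \<in> snd ` S_tilde (nef_cone \<Delta>) splitting i" by force
qed

text \<open>The face of \<Delta> k cut out by the equalities is spanned by its extreme points, which
  are 0 or vertices of the hull; a vertex in \<Delta>' l with l \<noteq> i would satisfy both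
  \<rho> \<bullet> n l = 1 - [k = l] and \<rho> \<bullet> n l = - [k = l].\<close>
lemma face_subset_part':
  assumes "y \<in> \<Delta> k" "\<And>j. j \<noteq> i \<Longrightarrow> y \<bullet> n j = - of_bool (k = j)"
  shows "y \<in> \<Delta>' i"
proof -
  let ?F = "{y \<in> \<Delta> k. \<forall>j\<in>-{i}. y \<bullet> n j = - of_bool (k = j)}"
  have cvx: "convex (\<Delta> k)" and cpt: "compact (\<Delta> k)"
    using lattice_polytope_convex lattice_polytope_compact nef_partition_lattice_polytope[OF nef]
    by blast+
  have face: "?F face_of \<Delta> k"
    using inner_lower_bound by (intro face_of_Int_supporting_hyperplanes_ge[OF cvx]) blast
  have "{v. v extreme_point_of ?F} \<subseteq> \<Delta>' i"
  proof safe
    fix v assume v: "v extreme_point_of ?F"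
    then have vk: "v extreme_point_of \<Delta> k" "v \<in> ?F" using extreme_point_of_face[OF face] by blast+
    show "v \<in> \<Delta>' i"
    proof (cases "v = 0")
      case True
      then show ?thesis using nef_partition_zero[OF nef'] by simp
    next
      case False
      then have vV: "v \<in> vertices (hull_union \<Delta>)"
        using nef_partition_extreme_point_vertex[OF nef vk(1)] by blast
      then obtain l where l: "v \<in> \<Delta>' l"
        using vertex_hull_union_in_part common_hull by metis
      have "l = i"
      proof (rule ccontr)
        assume "l \<noteq> i"
        then have "v \<bullet> n l = - of_bool (k = l)" using vk(2) by simp
        moreover have "v \<bullet> n l = 1 - of_bool (k = l)"
          using vertex_inner_part[OF vV _, of k l] vk(2) l by simp
        ultimately show False by simp
      qed
      then show ?thesis using l by simp
    qed
  qed
  then have "convex hull {v. v extreme_point_of ?F} \<subseteq> \<Delta>' i"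
    using lattice_polytope_convex[OF nef_partition_lattice_polytope[OF nef']] by (rule hull_minimal)
  moreover have "?F = convex hull {v. v extreme_point_of ?F}"
    using face_of_imp_compact[OF cvx cpt face] face_of_imp_convex[OF face]
    by (rule Krein_Milman_Minkowski)
  moreover have "y \<in> ?F" using assms by simp
  ultimately show ?thesis by blast
qed

lemma projection_subset_part': "snd ` S_tilde (nef_cone \<Delta>) splitting i \<subseteq> \<Delta>' i"
proof
  fix x assume "x \<in> snd ` S_tilde (nef_cone \<Delta>) splitting i"
  then obtain a where "(a, x) \<in> S_tilde (nef_cone \<Delta>) splitting i" by force
  then have ax: "(a, x) \<in> nef_cone \<Delta>" and eq: "\<And>j. a $ j + x \<bullet> n j = of_bool (j = i)"
    by (simp_all add: mem_S_tilde_splitting_iff)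
  obtain y where a: "\<And>k. 0 \<le> a $ k" and y: "\<And>k. y k \<in> \<Delta> k"
    and x: "x = (\<Sum>k\<in>UNIV. a $ k *\<^sub>R y k)"
    using ax by (rule nef_coneE) blast
  have "(\<Sum>j\<in>UNIV. a $ j + x \<bullet> n j) = (\<Sum>j\<in>UNIV. of_bool (j = i))" using eq by simp
  then have "(\<Sum>j\<in>UNIV. a $ j) + x \<bullet> (\<Sum>j\<in>UNIV. n j) = 1"
    by (simp add: sum.distrib inner_sum_right)
  then have sum_a: "(\<Sum>k\<in>UNIV. a $ k) = 1" by (simp add: sum_eq_0)
  have "y k \<in> \<Delta>' i" if "a $ k \<noteq> 0" for k
  proof (rule face_subset_part'[OF y])
    fix j assume "j \<noteq> i"
    have nonneg: "0 \<le> a $ m * (y m \<bullet> n j + of_bool (m = j))" for m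
      using a inner_lower_bound[OF y, of m j] by simp
    have "(\<Sum>m\<in>UNIV. a $ m * (y m \<bullet> n j + of_bool (m = j))) = x \<bullet> n j + a $ j"
      by (simp add: x inner_sum_left distrib_left sum.distrib)
    also have "\<dots> = 0" using eq[of j] \<open>j \<noteq> i\<close> by simp
    finally have "a $ k * (y k \<bullet> n j + of_bool (k = j)) = 0"
      using nonneg by (simp add: sum_nonneg_eq_0_iff)
    then show "y k \<bullet> n j = - of_bool (k = j)" using that by simp
  qed
  then have "(if a $ k = 0 then 0 else y k) \<in> \<Delta>' i" for k
    using nef_partition_zero[OF nef'] by simp
  moreover have "x = (\<Sum>k\<in>UNIV. a $ k *\<^sub>R (if a $ k = 0 then 0 else y k))"
    unfolding x by (rule sum.cong) auto
  ultimately show "x \<in> \<Delta>' i"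
    using convex_sum[OF finite_class.finite_UNIV
        lattice_polytope_convex[OF nef_partition_lattice_polytope[OF nef', of i]], of "\<lambda>k. a $ k"]
      sum_a a by simp
qed

lemma gorenstein_splitting: "gorenstein_splitting \<Delta> \<Delta>' splitting"
  by unfold_locales
    (simp_all add: nef nef' reflexive common_hull splitting_nonzero splitting_dual_cone
      splitting_lattice sum_splitting subset_antisym part'_subset_projection projection_subset_part')

end

lemma minkowski_sum_reindex:
  assumes "bij \<sigma>"
  shows "minkowski_sum (D \<circ> \<sigma>) = minkowski_sum D"
proof (intro equalityI subsetI)
  fix y assume "y \<in> minkowski_sum (D \<circ> \<sigma>)"
  then obtain x where x: "\<And>i. x i \<in> D (\<sigma> i)" "y = (\<Sum>i\<in>UNIV. x i)"
    unfolding minkowski_sum_def by auto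
  have "y = (\<Sum>j\<in>UNIV. x (inv \<sigma> j))"
    using x(2) sum.reindex_bij_betw[OF bij_imp_bij_inv[OF assms], of x] by simp
  moreover have "x (inv \<sigma> j) \<in> D j" for j
    using x(1)[of "inv \<sigma> j"] assms by (simp add: bij_is_surj surj_f_inv_f)
  ultimately show "y \<in> minkowski_sum D" by (simp add: minkowski_sumI)
next
  fix y assume "y \<in> minkowski_sum D"
  then obtain x where x: "\<And>j. x j \<in> D j" "y = (\<Sum>j\<in>UNIV. x j)"
    unfolding minkowski_sum_def by auto
  have "y = (\<Sum>i\<in>UNIV. x (\<sigma> i))"
    using x(2) sum.reindex_bij_betw[OF assms, of x] by simp
  moreover have "x (\<sigma> i) \<in> (D \<circ> \<sigma>) i" for i using x(1) by simp
  ultimately show "y \<in> minkowski_sum (D \<circ> \<sigma>)" by (simp add: minkowski_sumI)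
qed

lemma nef_partition_reindex: "bij \<sigma> \<Longrightarrow> nef_partition D \<Longrightarrow> nef_partition (D \<circ> \<sigma>)"
  unfolding nef_partition_def by (simp add: minkowski_sum_reindex)

lemma hull_union_reindex: "surj \<sigma> \<Longrightarrow> hull_union (D \<circ> \<sigma>) = hull_union D"
  unfolding hull_union_def by (metis image_comp)

lemma S_tilde_reindex:
  assumes "bij \<tau>"
  shows "S_tilde K (e \<circ> \<tau>) j = S_tilde K e (\<tau> j)"
proof -
  have "(\<forall>i. i \<noteq> j \<longrightarrow> x \<bullet> e (\<tau> i) = 0) \<longleftrightarrow> (\<forall>i. i \<noteq> \<tau> j \<longrightarrow> x \<bullet> e i = 0)" for x
    using assms by (metis bij_def injD surj_f_inv_f)
  then show ?thesis unfolding S_tilde_def by simp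
qed

context nef_partitions_common_hull
begin

lemma gorenstein_splitting_if_lin_equiv:
  assumes "bij \<sigma>" and equiv: "\<And>i. lin_equiv (hull_union \<Delta>)
    (nef_divisor (hull_union \<Delta>) (\<Delta>' (\<sigma> i))) (nef_divisor (hull_union \<Delta>) (\<Delta> i))"
  obtains e where "gorenstein_splitting \<Delta> \<Delta>' e"
proof -
  obtain n where n: "\<And>i. lattice_pt (n i)" "\<And>i \<rho>. \<rho> \<in> vertices (hull_union \<Delta>) \<Longrightarrow>
      \<rho> \<bullet> n i = of_bool (\<rho> \<in> \<Delta>' (\<sigma> i)) - of_bool (\<rho> \<in> \<Delta> i)"
    using equiv[unfolded lin_equiv_nef_divisors_iff] by metis
  interpret renumbered: divisor_differences \<Delta> "\<Delta>' \<circ> \<sigma>" n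
    using nef nef' reflexive common_hull n \<open>bij \<sigma>\<close>
    by unfold_locales (simp_all add: nef_partition_reindex hull_union_reindex bij_is_surj)
  interpret gorenstein_splitting \<Delta> "\<Delta>' \<circ> \<sigma>" renumbered.splitting
    by (rule renumbered.gorenstein_splitting)
  have "\<Delta>' i = snd ` S_tilde (nef_cone \<Delta>) (renumbered.splitting \<circ> inv \<sigma>) i" for i
    using parts'_eq[of "inv \<sigma> i"] \<open>bij \<sigma>\<close>
    by (simp add: S_tilde_reindex bij_imp_bij_inv bij_is_surj surj_f_inv_f)
  moreover have "(\<Sum>i\<in>UNIV. (renumbered.splitting \<circ> inv \<sigma>) i) = deg_dual"
    using sum.reindex_bij_betw[OF bij_imp_bij_inv[OF \<open>bij \<sigma>\<close>], of renumbered.splitting]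
      sum_eq_deg_dual by simp
  ultimately have "gorenstein_splitting \<Delta> \<Delta>' (renumbered.splitting \<circ> inv \<sigma>)"
    using nef nef' reflexive common_hull nonzero dual lattice
    by unfold_locales simp_all
  then show ?thesis by (rule that)
qed

end

theorem proposition2p7:
  fixes \<Delta> \<Delta>t :: "'s::finite \<Rightarrow> (real^'d) set"
  assumes "nef_partition \<Delta>"
    and "reflexive_polytope (hull_union \<Delta>)"
    and "nef_partition \<Delta>t"
    and "hull_union \<Delta>t = hull_union \<Delta>"
  shows "(\<exists>e :: 's \<Rightarrow> (real^'s) \<times> (real^'d).
            (\<forall>i. e i \<noteq> 0 \<and> e i \<in> dual_cone (nef_cone \<Delta>) \<and> lattice_pt2 (e i))
            \<and> (\<Sum>i\<in>UNIV. e i) = deg_dual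
            \<and> (\<forall>i. \<Delta>t i = snd ` S_tilde (nef_cone \<Delta>) e i))
         \<longleftrightarrow>
         (\<exists>\<sigma> :: 's \<Rightarrow> 's. bij \<sigma> \<and>
            (\<forall>i. lin_equiv (hull_union \<Delta>)
                   (nef_divisor (hull_union \<Delta>) (\<Delta>t (\<sigma> i)))
                   (nef_divisor (hull_union \<Delta>) (\<Delta> i))))"
proof -
  interpret nef_partitions_common_hull \<Delta> \<Delta>t
    using assms by unfold_locales
  have "(\<exists>e. gorenstein_splitting \<Delta> \<Delta>t e) \<longleftrightarrow> (\<exists>\<sigma>. bij \<sigma> \<and> (\<forall>i. lin_equiv (hull_union \<Delta>)
      (nef_divisor (hull_union \<Delta>) (\<Delta>t (\<sigma> i))) (nef_divisor (hull_union \<Delta>) (\<Delta> i))))"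
    using gorenstein_splitting.lin_equiv_nef_divisors gorenstein_splitting_if_lin_equiv by metis
  moreover have "gorenstein_splitting \<Delta> \<Delta>t e \<longleftrightarrow>
      (\<forall>i. e i \<noteq> 0 \<and> e i \<in> dual_cone (nef_cone \<Delta>) \<and> lattice_pt2 (e i))
      \<and> (\<Sum>i\<in>UNIV. e i) = deg_dual \<and> (\<forall>i. \<Delta>t i = snd ` S_tilde (nef_cone \<Delta>) e i)" for e
    using assms unfolding gorenstein_splitting_def gorenstein_splitting_axioms_def
      nef_partitions_common_hull_def by blast
  ultimately show ?thesis by simp
qed

end
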